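(* Let $X_1,\ldots,X_n$ be non-empty sets, $\Omega=X_1\times\cdots\times X_n$, and let $S\subset\Omega$ be a good set with related components $\{R_\alpha\}$. For each $i$, let $E_i$ be the equivalence relation on $\Pi_iS$ defined by: $x_iE_iy_i$ iff there is a finite sequence of related components $R_1,\ldots,R_m$ of $S$ with $x_i\in\Pi_iR_1$, $y_i\in\Pi_iR_m$ and $\Pi_iR_j\cap\Pi_iR_{j+1}\neq\emptyset$ for $1\le j\le m-1$. Let $[x_i]$ denote the $E_i$-class of $x_i$ and $\mathcal F_i$ the set of $E_i$-classes. Let $C\subset S$ be a cross-section of the related components (i.e. $C$ contains exactly one point of each $R_\alpha$), and define $\phi:C\to\mathcal F_1\times\cdots\times\mathcal F_n$ by $\phi(x_1,\ldots,x_n)=([x_1],\ldots,[x_n])$. Then $\phi(C)$ is a good subset of $\mathcal F_1\times\cdots\times\mathcal F_n$, and $S$ is full if and only if $\phi(C)$ is full.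
   Context: For a product $Y_1\times\cdots\times Y_n$ of non-empty sets, $\Pi_i$ denotes the canonical projection onto $Y_i$. A subset $T$ of such a product is good if every complex-valued function $f$ on $T$ can be written as $f(y_1,\ldots,y_n)=u_1(y_1)+\cdots+u_n(y_n)$ on $T$ for suitable complex-valued functions $u_i$ on $Y_i$. $T$ is full if it is a maximal good subset of $\Pi_1T\times\cdots\times\Pi_nT$. For a good set $S$, two points of $S$ are related if some finite full subset of $S$ contains both; this is an equivalence relation whose classes are the related components of $S$. *)

theory Defs
  imports Complex_Main "HOL-Library.FuncSet"
begin

text \<open>Points of X_1 x ... x X_n are extensional functions on {..<n} (PiE {..<n} X).\<close>

definition proj :: "nat \<Rightarrow> (nat \<Rightarrow> 'a) set \<Rightarrow> 'a set" where
  "proj i T = (\<lambda>t. t i) ` T"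

definition good :: "nat \<Rightarrow> (nat \<Rightarrow> 'a) set \<Rightarrow> bool" where
  "good n T \<longleftrightarrow> (\<forall>f :: (nat \<Rightarrow> 'a) \<Rightarrow> complex. \<exists>u :: nat \<Rightarrow> 'a \<Rightarrow> complex.
      \<forall>t\<in>T. f t = (\<Sum>i<n. u i (t i)))"

definition full :: "nat \<Rightarrow> (nat \<Rightarrow> 'a) set \<Rightarrow> bool" where
  "full n T \<longleftrightarrow> T \<subseteq> PiE {..<n} (\<lambda>i. proj i T) \<and> good n T \<and>
     (\<forall>T'. T \<subseteq> T' \<and> T' \<subseteq> PiE {..<n} (\<lambda>i. proj i T) \<and> good n T' \<longrightarrow> T' = T)"

definition related :: "nat \<Rightarrow> (nat \<Rightarrow> 'a) set \<Rightarrow> (nat \<Rightarrow> 'a) \<Rightarrow> (nat \<Rightarrow> 'a) \<Rightarrow> bool" where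
  "related n S x y \<longleftrightarrow> (\<exists>F. finite F \<and> F \<subseteq> S \<and> full n F \<and> x \<in> F \<and> y \<in> F)"

definition rel_components :: "nat \<Rightarrow> (nat \<Rightarrow> 'a) set \<Rightarrow> (nat \<Rightarrow> 'a) set set" where
  "rel_components n S = S // {(x, y). related n S x y}"

definition Erel :: "nat \<Rightarrow> (nat \<Rightarrow> 'a) set \<Rightarrow> nat \<Rightarrow> 'a \<Rightarrow> 'a \<Rightarrow> bool" where
  "Erel n S i x y \<longleftrightarrow> x \<in> proj i S \<and> y \<in> proj i S \<and>
     (\<exists>Rs. Rs \<noteq> [] \<and> set Rs \<subseteq> rel_components n S \<and>
        x \<in> proj i (hd Rs) \<and> y \<in> proj i (last Rs) \<and>
        (\<forall>j. Suc j < length Rs \<longrightarrow> proj i (Rs ! j) \<inter> proj i (Rs ! Suc j) \<noteq> {}))"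

definition eclass :: "nat \<Rightarrow> (nat \<Rightarrow> 'a) set \<Rightarrow> nat \<Rightarrow> 'a \<Rightarrow> 'a set" where
  "eclass n S i x = {y. Erel n S i x y}"

definition classes :: "nat \<Rightarrow> (nat \<Rightarrow> 'a) set \<Rightarrow> nat \<Rightarrow> 'a set set" where
  "classes n S i = proj i S // {(x, y). Erel n S i x y}"

definition phi :: "nat \<Rightarrow> (nat \<Rightarrow> 'a) set \<Rightarrow> (nat \<Rightarrow> 'a) \<Rightarrow> (nat \<Rightarrow> 'a set)" where
  "phi n S c = restrict (\<lambda>i. eclass n S i (c i)) {..<n}"

end

(*
  A good set T is full iff all its relations are trivial: whenever
  u_1(t_1) + ... + u_n(t_n) = 0 for all t in T, every u_i is constant on Pi_i T.
  Indeed, a relation that does not vanish at a point p of the box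
  Pi_1 T x ... x Pi_n T allows p to be adjoined to T, while the indicator function of a
  point adjoined to T is represented by a non-trivial relation.

  Since any two related points lie in a finite full set, a sum v_1(x_1) + ... + v_n(x_n)
  that is constant on every related component has each v_i constant on the i-th projection
  of every component, hence along overlapping chains of components, i.e. on E_i-classes:
  such v_i are functions on F_i. Pulling back along s |-> phi(c(s)), where c(s) is the
  point of C related to s, identifies functions on phi(C) with functions on S that are
  constant on related components. This transfers goodness, and triviality of relations,
  between S and phi(C).
*)
theory Submission
  imports Defs
begin

definition trivial_relations :: "nat \<Rightarrow> (nat \<Rightarrow> 'a) set \<Rightarrow> bool" where
  "trivial_relations n T \<longleftrightarrow> (\<forall>u :: nat \<Rightarrow> 'a \<Rightarrow> complex.
     (\<forall>t\<in>T. (\<Sum>i<n. u i (t i)) = 0) \<longrightarrow> (\<forall>i<n. \<forall>s\<in>T. \<forall>t\<in>T. u i (s i) = u i (t i)))"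

lemma good_subset: "good n T \<Longrightarrow> T' \<subseteq> T \<Longrightarrow> good n T'"
  unfolding good_def by blast

lemma good_nonempty_imp_pos: "good n T \<Longrightarrow> T \<noteq> {} \<Longrightarrow> 0 < n"
  unfolding good_def by (erule allE[where x="\<lambda>_. 1"]) auto

lemma subset_PiE_proj: "T \<subseteq> extensional {..<n} \<Longrightarrow> T \<subseteq> PiE {..<n} (\<lambda>i. proj i T)"
  by (auto simp: PiE_def proj_def)

lemma full_imp_good: "full n T \<Longrightarrow> good n T"
  unfolding full_def by blast

lemma full_imp_extensional: "full n T \<Longrightarrow> T \<subseteq> extensional {..<n}"
  unfolding full_def PiE_def by blast

lemma full_empty: "full n {}"
proof -
  have "T = {}" if "T \<subseteq> PiE {..<n} (\<lambda>i. proj i {})" "good n T" for T :: "(nat \<Rightarrow> 'a) set"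
    using that good_nonempty_imp_pos by (fastforce simp: PiE_eq_empty_iff proj_def)
  then show ?thesis unfolding full_def good_def by auto
qed

lemma full_relation_vanishes_on_PiE:
  fixes u :: "nat \<Rightarrow> 'a \<Rightarrow> complex"
  assumes F: "full n T" and Z: "\<forall>t\<in>T. (\<Sum>i<n. u i (t i)) = 0"
    and p: "p \<in> PiE {..<n} (\<lambda>i. proj i T)"
  shows "(\<Sum>i<n. u i (p i)) = 0"
proof (rule ccontr)
  assume ne: "(\<Sum>i<n. u i (p i)) \<noteq> 0"
  \<comment> \<open>then adding a suitable multiple of u corrects any representation on T at p\<close>
  have "good n (insert p T)"
    unfolding good_def
  proof
    fix f :: "(nat \<Rightarrow> 'a) \<Rightarrow> complex"
    from F obtain v where v: "\<forall>t\<in>T. f t = (\<Sum>i<n. v i (t i))"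
      unfolding full_def good_def by blast
    define c where "c = (f p - (\<Sum>i<n. v i (p i))) / (\<Sum>i<n. u i (p i))"
    have sum_eq: "(\<Sum>i<n. v i (t i) + c * u i (t i)) = (\<Sum>i<n. v i (t i)) + c * (\<Sum>i<n. u i (t i))" for t
      by (simp add: sum.distrib sum_distrib_left)
    have "c * (\<Sum>i<n. u i (p i)) = f p - (\<Sum>i<n. v i (p i))"
      using ne by (simp add: c_def)
    then have "f t = (\<Sum>i<n. v i (t i) + c * u i (t i))" if "t \<in> insert p T" for t
      using that v Z by (auto simp: sum_eq)
    then show "\<exists>w. \<forall>t\<in>insert p T. f t = (\<Sum>i<n. w i (t i))"
      by (rule_tac x="\<lambda>i y. v i y + c * u i y" in exI) simp
  qed
  moreover have "insert p T \<subseteq> PiE {..<n} (\<lambda>i. proj i T)" using p F unfolding full_def by blast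
  ultimately have "insert p T = T" using F unfolding full_def by blast
  then show False using ne Z by auto
qed

lemma full_imp_trivial_relations:
  assumes F: "full n T"
  shows "trivial_relations n T"
  unfolding trivial_relations_def
proof (intro allI impI ballI)
  fix u :: "nat \<Rightarrow> 'a \<Rightarrow> complex" and i s t
  assume Z: "\<forall>t\<in>T. (\<Sum>i<n. u i (t i)) = 0" and i: "i < n" and s: "s \<in> T" and t: "t \<in> T"
  define p where "p = s(i := t i)"
  have "p \<in> PiE {..<n} (\<lambda>i. proj i T)"
    using F s t i unfolding full_def p_def by (auto simp: PiE_iff proj_def extensional_def)
  then have "(\<Sum>k<n. u k (p k)) = 0" using full_relation_vanishes_on_PiE[OF F Z] by blast
  moreover have "(\<Sum>k<n. u k (p k)) = (\<Sum>k<n. u k (s k) + (if k = i then u i (t i) - u i (s i) else 0))"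
    by (rule sum.cong) (auto simp: p_def)
  ultimately have "(\<Sum>k<n. u k (s k)) + (u i (t i) - u i (s i)) = 0"
    using i by (simp add: sum.distrib)
  then show "u i (s i) = u i (t i)" using Z s by simp
qed

lemma full_if_trivial_relations:
  fixes T :: "(nat \<Rightarrow> 'a) set"
  assumes good: "good n T" and box: "T \<subseteq> PiE {..<n} (\<lambda>i. proj i T)"
    and trivial: "trivial_relations n T"
  shows "full n T"
proof (cases "T = {}")
  case True
  then show ?thesis by (simp add: full_empty)
next
  case False
  then obtain t0 where t0: "t0 \<in> T" by blast
  have "T' \<subseteq> T" if T': "T \<subseteq> T'" "T' \<subseteq> PiE {..<n} (\<lambda>i. proj i T)" "good n T'" for T'
  proof
    fix q assume q: "q \<in> T'"
    show "q \<in> T"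
    proof (rule ccontr)
      assume "q \<notin> T"
      obtain u :: "nat \<Rightarrow> 'a \<Rightarrow> complex"
        where u: "\<forall>t\<in>T'. (if t = q then 1 else 0) = (\<Sum>i<n. u i (t i))"
        using T'(3) unfolding good_def by (erule_tac x="\<lambda>t. if t = q then 1 else 0" in allE) blast
      have Z: "\<forall>t\<in>T. (\<Sum>i<n. u i (t i)) = 0"
        using u T'(1) \<open>q \<notin> T\<close> by (metis subsetD)
      have "u i (q i) = u i (t0 i)" if i: "i < n" for i
      proof -
        obtain t where "t \<in> T" "q i = t i" using q T'(2) i by (force simp: PiE_iff proj_def)
        then show ?thesis using trivial Z t0 i unfolding trivial_relations_def by metis
      qed
      then have "(\<Sum>i<n. u i (q i)) = (\<Sum>i<n. u i (t0 i))" by (intro sum.cong) auto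
      then show False using u q Z t0 by (metis one_neq_zero)
    qed
  qed
  then show ?thesis unfolding full_def using good box by blast
qed

lemma full_iff_trivial_relations:
  "T \<subseteq> extensional {..<n} \<Longrightarrow> full n T \<longleftrightarrow> good n T \<and> trivial_relations n T"
  by (metis full_imp_good full_imp_trivial_relations full_if_trivial_relations subset_PiE_proj)

lemma full_singleton:
  assumes n: "0 < n" and x: "x \<in> extensional {..<n}"
  shows "full n {x}"
proof -
  have "good n {x}"
    unfolding good_def
  proof
    fix f :: "(nat \<Rightarrow> 'a) \<Rightarrow> complex"
    show "\<exists>u. \<forall>t\<in>{x}. f t = (\<Sum>i<n. u i (t i))"
      by (rule exI[where x="\<lambda>i y. if i = 0 then f x else 0"]) (simp add: n)
  qed
  moreover have "trivial_relations n {x}"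
    unfolding trivial_relations_def by blast
  ultimately show ?thesis using x full_iff_trivial_relations by blast
qed

lemma full_Un:
  assumes F1: "full n F1" and F2: "full n F2" and y: "y \<in> F1 \<inter> F2"
    and good: "good n (F1 \<union> F2)"
  shows "full n (F1 \<union> F2)"
proof -
  have "trivial_relations n (F1 \<union> F2)"
    unfolding trivial_relations_def
  proof (intro allI impI)
    fix u :: "nat \<Rightarrow> 'a \<Rightarrow> complex" and i
    assume "\<forall>t\<in>F1 \<union> F2. (\<Sum>i<n. u i (t i)) = 0" and i: "i < n"
    then have "\<forall>t\<in>F1. (\<Sum>i<n. u i (t i)) = 0" "\<forall>t\<in>F2. (\<Sum>i<n. u i (t i)) = 0" by auto
    then have "u i (s i) = u i (y i)" if "s \<in> F1 \<union> F2" for s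
      using that y i full_imp_trivial_relations[OF F1] full_imp_trivial_relations[OF F2]
      unfolding trivial_relations_def by blast
    then show "\<forall>s\<in>F1 \<union> F2. \<forall>t\<in>F1 \<union> F2. u i (s i) = u i (t i)" by metis
  qed
  moreover have "F1 \<union> F2 \<subseteq> extensional {..<n}"
    using F1 F2 full_imp_extensional by blast
  ultimately show ?thesis using good full_iff_trivial_relations by blast
qed

lemma overlapping_chain_const:
  assumes "As \<noteq> []" and "\<forall>A\<in>set As. \<forall>a\<in>A. \<forall>b\<in>A. w a = w b"
    and "\<forall>j. Suc j < length As \<longrightarrow> As ! j \<inter> As ! Suc j \<noteq> {}"
    and "x \<in> hd As" and "y \<in> last As"
  shows "w x = w y"
  using assms
proof (induction As arbitrary: x)
  case Nil
  then show ?case by simp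
next
  case (Cons A As)
  show ?case
  proof (cases "As = []")
    case True
    then have "x \<in> A" "y \<in> A" using Cons.prems(4,5) by simp_all
    then show ?thesis using Cons.prems(2) by (meson list.set_intros(1))
  next
    case False
    have "A \<inter> hd As \<noteq> {}"
      using Cons.prems(3)[rule_format, of 0] False by (simp add: hd_conv_nth)
    then obtain z where z: "z \<in> A" "z \<in> hd As" by blast
    have "x \<in> A" using Cons.prems(4) by simp
    then have "w x = w z" using Cons.prems(2) z(1) by (meson list.set_intros(1))
    also have "w z = w y"
    proof (rule Cons.IH[OF False])
      show "\<forall>A\<in>set As. \<forall>a\<in>A. \<forall>b\<in>A. w a = w b"
        using Cons.prems(2) by (meson list.set_intros(2))
      show "\<forall>j. Suc j < length As \<longrightarrow> As ! j \<inter> As ! Suc j \<noteq> {}"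
      proof (intro allI impI)
        fix j assume "Suc j < length As"
        then show "As ! j \<inter> As ! Suc j \<noteq> {}" using Cons.prems(3)[rule_format, of "Suc j"] by simp
      qed
      show "z \<in> hd As" by (fact z(2))
      show "y \<in> last As" using Cons.prems(5) False by simp
    qed
    finally show ?thesis .
  qed
qed

locale good_set =
  fixes n :: nat and S :: "(nat \<Rightarrow> 'a) set"
  assumes S_extensional: "S \<subseteq> extensional {..<n}" and good_S: "good n S"
begin

lemma related_imp_mem: "related n S x y \<Longrightarrow> x \<in> S \<and> y \<in> S"
  unfolding related_def by blast

lemma related_refl: "x \<in> S \<Longrightarrow> related n S x x"
  unfolding related_def
  using full_singleton good_nonempty_imp_pos[OF good_S] S_extensional by blast

lemma related_sym: "related n S x y \<Longrightarrow> related n S y x"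
  unfolding related_def by blast

lemma related_trans:
  assumes "related n S x y" and "related n S y z"
  shows "related n S x z"
proof -
  from assms obtain F1 F2 where F1: "finite F1" "F1 \<subseteq> S" "full n F1" "x \<in> F1" "y \<in> F1"
    and F2: "finite F2" "F2 \<subseteq> S" "full n F2" "y \<in> F2" "z \<in> F2"
    unfolding related_def by blast
  have "good n (F1 \<union> F2)" using good_subset[OF good_S] F1(2) F2(2) by blast
  then have "full n (F1 \<union> F2)" using full_Un[OF F1(3) F2(3)] F1(5) F2(4) by blast
  then show ?thesis unfolding related_def using F1 F2 by blast
qed

lemma equiv_related: "equiv S {(x, y). related n S x y}"
  by (rule equivI) (auto intro: refl_onI symI transI related_refl related_sym related_trans
      dest: related_imp_mem)

lemma related_class_in_rel_components:
  "x \<in> S \<Longrightarrow> {(x, y). related n S x y} `` {x} \<in> rel_components n S"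
  unfolding rel_components_def by (rule quotientI)

lemma related_imp_coordinate_eq:
  fixes v :: "nat \<Rightarrow> 'a \<Rightarrow> complex"
  assumes const: "\<And>s t. related n S s t \<Longrightarrow> (\<Sum>i<n. v i (s i)) = (\<Sum>i<n. v i (t i))"
    and st: "related n S s t" and i: "i < n"
  shows "v i (s i) = v i (t i)"
proof -
  obtain F where F: "finite F" "F \<subseteq> S" "full n F" "s \<in> F" "t \<in> F"
    using st unfolding related_def by blast
  have n: "0 < n" using good_nonempty_imp_pos[OF good_S] F(2,4) by blast
  \<comment> \<open>shifting v 0 by the constant value of the sum gives a relation on F\<close>
  define u where "u k y = v k y - (if k = 0 then (\<Sum>i<n. v i (s i)) else 0)" for k y
  have "(\<Sum>k<n. u k (z k)) = 0" if z: "z \<in> F" for z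
  proof -
    have "related n S s z" unfolding related_def using F z by blast
    then have "(\<Sum>k<n. v k (z k)) = (\<Sum>i<n. v i (s i))" using const by simp
    then show ?thesis using n by (simp add: u_def sum_subtractf)
  qed
  then have "u i (s i) = u i (t i)"
    using full_imp_trivial_relations[OF F(3)] F(4,5) i unfolding trivial_relations_def by blast
  then show ?thesis by (simp add: u_def)
qed

lemma Erel_imp_eq:
  assumes const: "\<And>s t. related n S s t \<Longrightarrow> w (s i) = w (t i)" and E: "Erel n S i x y"
  shows "w x = w y"
proof -
  obtain Rs where Rs: "Rs \<noteq> []" "set Rs \<subseteq> rel_components n S" "x \<in> proj i (hd Rs)"
    "y \<in> proj i (last Rs)" "\<forall>j. Suc j < length Rs \<longrightarrow> proj i (Rs ! j) \<inter> proj i (Rs ! Suc j) \<noteq> {}"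
    using E unfolding Erel_def by blast
  show ?thesis
  proof (rule overlapping_chain_const[of "map (proj i) Rs"])
    show "\<forall>A\<in>set (map (proj i) Rs). \<forall>a\<in>A. \<forall>b\<in>A. w a = w b"
    proof (intro ballI)
      fix A a b assume "A \<in> set (map (proj i) Rs)" "a \<in> A" "b \<in> A"
      then obtain R s t where "R \<in> rel_components n S" "s \<in> R" "t \<in> R" "a = s i" "b = t i"
        using Rs(2) unfolding proj_def by auto
      then have "related n S s t" "a = s i" "b = t i"
        using in_quotient_imp_in_rel[OF equiv_related, of R s t] unfolding rel_components_def by auto
      then show "w a = w b" using const by blast
    qed
    show "\<forall>j. Suc j < length (map (proj i) Rs) \<longrightarrow>
        map (proj i) Rs ! j \<inter> map (proj i) Rs ! Suc j \<noteq> {}"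
      using Rs(5) by simp
  qed (use Rs(1,3,4) in \<open>simp_all add: hd_map last_map\<close>)
qed

lemma Erel_refl: "s \<in> S \<Longrightarrow> Erel n S i (s i) (s i)"
proof -
  assume s: "s \<in> S"
  let ?R = "{(x, y). related n S x y} `` {s}"
  have "?R \<in> rel_components n S" using s by (rule related_class_in_rel_components)
  moreover have "s \<in> ?R" using related_refl s by simp
  ultimately show ?thesis
    unfolding Erel_def proj_def using s by (intro conjI exI[of _ "[?R]"]) auto
qed

lemma Erel_Cons:
  assumes R: "R \<in> rel_components n S" and x: "x \<in> proj i R" and y: "y \<in> proj i R"
    and E: "Erel n S i x z"
  shows "Erel n S i y z"
proof -
  obtain Rs where Rs: "Rs \<noteq> []" "set Rs \<subseteq> rel_components n S" "x \<in> proj i (hd Rs)"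
    "z \<in> proj i (last Rs)" "\<forall>j. Suc j < length Rs \<longrightarrow> proj i (Rs ! j) \<inter> proj i (Rs ! Suc j) \<noteq> {}"
    using E unfolding Erel_def by blast
  have "R \<subseteq> S"
    using in_quotient_imp_subset[OF equiv_related] R unfolding rel_components_def by blast
  then have yS: "y \<in> proj i S" using y by (auto simp: proj_def)
  have chain: "proj i ((R # Rs) ! j) \<inter> proj i ((R # Rs) ! Suc j) \<noteq> {}"
    if "Suc j < length (R # Rs)" for j
  proof (cases j)
    case 0
    then show ?thesis using x Rs(1,3) by (cases Rs) auto
  next
    case (Suc j')
    then show ?thesis using Rs(5) that by auto
  qed
  have "z \<in> proj i S" using E unfolding Erel_def by blast
  moreover have "set (R # Rs) \<subseteq> rel_components n S" using R Rs(2) by simp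
  moreover have "z \<in> proj i (last (R # Rs))" using Rs(1,4) by simp
  ultimately show ?thesis
    unfolding Erel_def using yS y chain by (intro conjI exI[of _ "R # Rs"]) auto
qed

lemma eclass_eq_if_related:
  assumes "related n S s t"
  shows "eclass n S i (s i) = eclass n S i (t i)"
proof -
  let ?R = "{(x, y). related n S x y} `` {s}"
  have "?R \<in> rel_components n S"
    using assms related_imp_mem related_class_in_rel_components by blast
  moreover have "s i \<in> proj i ?R" "t i \<in> proj i ?R"
    using assms related_imp_mem related_refl unfolding proj_def by auto
  ultimately have "Erel n S i (s i) y \<longleftrightarrow> Erel n S i (t i) y" for y
    using Erel_Cons by blast
  then show ?thesis unfolding eclass_def by blast
qed

lemma some_eclass_coordinate:
  fixes v :: "nat \<Rightarrow> 'a \<Rightarrow> complex"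
  assumes const: "\<And>s t. related n S s t \<Longrightarrow> (\<Sum>i<n. v i (s i)) = (\<Sum>i<n. v i (t i))"
    and c: "c \<in> S" and i: "i < n"
  shows "v i (SOME y. y \<in> eclass n S i (c i)) = v i (c i)"
proof -
  have "c i \<in> eclass n S i (c i)" using Erel_refl[OF c] unfolding eclass_def by simp
  then have "(SOME y. y \<in> eclass n S i (c i)) \<in> eclass n S i (c i)" by (rule someI)
  then have "Erel n S i (c i) (SOME y. y \<in> eclass n S i (c i))" unfolding eclass_def by simp
  with related_imp_coordinate_eq[OF const _ i] show ?thesis
    by (rule Erel_imp_eq[THEN sym])
qed

end

locale cross_section = good_set +
  fixes C :: "(nat \<Rightarrow> 'a) set"
  assumes C_subset: "C \<subseteq> S"
    and C_unique: "\<forall>R\<in>rel_components n S. \<exists>!c. c \<in> C \<inter> R"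
begin

definition rep :: "(nat \<Rightarrow> 'a) \<Rightarrow> nat \<Rightarrow> 'a" where
  "rep x = (THE c. c \<in> C \<and> related n S x c)"

lemma rep_unique: "x \<in> S \<Longrightarrow> \<exists>!c. c \<in> C \<and> related n S x c"
proof -
  assume "x \<in> S"
  then have "{(x, y). related n S x y} `` {x} \<in> rel_components n S"
    by (rule related_class_in_rel_components)
  from C_unique[rule_format, OF this] show ?thesis by simp
qed

lemma rep_mem_C_related: "x \<in> S \<Longrightarrow> rep x \<in> C \<and> related n S x (rep x)"
  unfolding rep_def by (rule theI'[OF rep_unique])

lemma rep_id: "c \<in> C \<Longrightarrow> rep c = c"
  unfolding rep_def using C_subset related_refl by (intro the1_equality rep_unique) auto

lemma rep_eq_if_related:
  assumes "related n S x y"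
  shows "rep x = rep y"
proof -
  have "related n S x c \<longleftrightarrow> related n S y c" for c
    using assms related_sym related_trans by blast
  then show ?thesis unfolding rep_def by simp
qed

lemma phi_rep: "s \<in> S \<Longrightarrow> i < n \<Longrightarrow> phi n S (rep s) i = eclass n S i (s i)"
  unfolding phi_def using eclass_eq_if_related[of s "rep s" i] rep_mem_C_related by simp

lemma phi_image_subset_classes: "phi n S ` C \<subseteq> PiE {..<n} (classes n S)"
proof
  fix t assume "t \<in> phi n S ` C"
  then obtain c where c: "c \<in> C" "t = phi n S c" by blast
  have "eclass n S i (c i) \<in> classes n S i" for i
  proof -
    have "c i \<in> proj i S" using c C_subset by (auto simp: proj_def)
    then have "{(x, y). Erel n S i x y} `` {c i} \<in> classes n S i"
      unfolding classes_def by (rule quotientI)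
    moreover have "{(x, y). Erel n S i x y} `` {c i} = eclass n S i (c i)"
      unfolding eclass_def by auto
    ultimately show ?thesis by simp
  qed
  then show "t \<in> PiE {..<n} (classes n S)" using c unfolding phi_def by auto
qed

lemma good_phi_image: "good n (phi n S ` C)"
  unfolding good_def
proof
  fix f :: "(nat \<Rightarrow> 'a set) \<Rightarrow> complex"
  obtain v where v: "\<And>s. s \<in> S \<Longrightarrow> f (phi n S (rep s)) = (\<Sum>i<n. v i (s i))"
    using good_S[unfolded good_def, rule_format, of "\<lambda>s. f (phi n S (rep s))"] by blast
  have const: "(\<Sum>i<n. v i (s i)) = (\<Sum>i<n. v i (t i))" if "related n S s t" for s t
    using that v[of s] v[of t] rep_eq_if_related related_imp_mem by metis
  show "\<exists>u. \<forall>t\<in>phi n S ` C. f t = (\<Sum>i<n. u i (t i))"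
  proof (intro exI ballI)
    fix t assume "t \<in> phi n S ` C"
    then obtain c where c: "c \<in> C" "t = phi n S c" by blast
    then have cS: "c \<in> S" using C_subset by blast
    have "v i (SOME y. y \<in> t i) = v i (c i)" if "i < n" for i
      using some_eclass_coordinate[OF const cS that] that c(2) by (simp add: phi_def)
    then have "(\<Sum>i<n. v i (c i)) = (\<Sum>i<n. v i (SOME y. y \<in> t i))" by simp
    moreover have "f t = (\<Sum>i<n. v i (c i))" using v[OF cS] rep_id[OF c(1)] c(2) by simp
    ultimately show "f t = (\<Sum>i<n. v i (SOME y. y \<in> t i))" by simp
  qed
qed

lemma trivial_relations_phi_image_iff:
  "trivial_relations n (phi n S ` C) \<longleftrightarrow> trivial_relations n S"
proof
  assume TR: "trivial_relations n S"
  show "trivial_relations n (phi n S ` C)"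
    unfolding trivial_relations_def
  proof (intro allI impI ballI)
    fix u :: "nat \<Rightarrow> 'a set \<Rightarrow> complex" and i K L
    assume Z: "\<forall>K\<in>phi n S ` C. (\<Sum>i<n. u i (K i)) = 0" and i: "i < n"
      and K: "K \<in> phi n S ` C" and L: "L \<in> phi n S ` C"
    define w where "w i x = u i (eclass n S i x)" for i x
    have "(\<Sum>i<n. w i (s i)) = 0" if s: "s \<in> S" for s
    proof -
      have "(\<Sum>i<n. w i (s i)) = (\<Sum>i<n. u i (phi n S (rep s) i))"
        using s by (simp add: w_def phi_rep)
      also have "\<dots> = 0" using Z rep_mem_C_related[OF s] by blast
      finally show ?thesis .
    qed
    then have w_const: "w i (s i) = w i (t i)" if "s \<in> S" "t \<in> S" for s t
      using TR i that unfolding trivial_relations_def by blast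
    obtain c d where "c \<in> C" "K = phi n S c" "d \<in> C" "L = phi n S d" using K L by blast
    with w_const[of c d] C_subset i show "u i (K i) = u i (L i)"
      by (auto simp: w_def phi_def)
  qed
next
  assume TR: "trivial_relations n (phi n S ` C)"
  show "trivial_relations n S"
    unfolding trivial_relations_def
  proof (intro allI impI ballI)
    fix v :: "nat \<Rightarrow> 'a \<Rightarrow> complex" and i s t
    assume Z: "\<forall>s\<in>S. (\<Sum>i<n. v i (s i)) = 0" and i: "i < n" and s: "s \<in> S" and t: "t \<in> S"
    have const: "(\<Sum>i<n. v i (s i)) = (\<Sum>i<n. v i (t i))" if "related n S s t" for s t
      using Z that related_imp_mem by simp
    define u where "u i K = v i (SOME y. y \<in> K)" for i K
    have u_phi: "u i (phi n S c i) = v i (c i)" if "c \<in> S" "i < n" for c i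
      using some_eclass_coordinate[OF const that] that(2) by (simp add: u_def phi_def)
    have "(\<Sum>i<n. u i (K i)) = 0" if K: "K \<in> phi n S ` C" for K
    proof -
      obtain c where c: "c \<in> C" "K = phi n S c" using K by blast
      then have cS: "c \<in> S" using C_subset by blast
      have "(\<Sum>i<n. u i (K i)) = (\<Sum>i<n. v i (c i))"
        by (rule sum.cong) (simp_all add: c(2) u_phi[OF cS])
      then show ?thesis using Z cS by simp
    qed
    then have u_const: "u i (K i) = u i (L i)" if "K \<in> phi n S ` C" "L \<in> phi n S ` C" for K L
      using TR i that unfolding trivial_relations_def by blast
    have v_rep: "v i (x i) = u i (phi n S (rep x) i)" if x: "x \<in> S" for x
    proof -
      have "v i (x i) = v i (rep x i)"
        using related_imp_coordinate_eq[of v, OF const _ i] rep_mem_C_related[OF x] by blast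
      also have "\<dots> = u i (phi n S (rep x) i)"
        using u_phi[OF _ i] rep_mem_C_related[OF x] C_subset by auto
      finally show ?thesis .
    qed
    show "v i (s i) = v i (t i)"
      using v_rep[OF s] v_rep[OF t] u_const rep_mem_C_related[OF s] rep_mem_C_related[OF t]
      by simp
  qed
qed

lemma full_phi_image_iff: "full n (phi n S ` C) \<longleftrightarrow> full n S"
proof -
  have "phi n S ` C \<subseteq> extensional {..<n}" by (auto simp: phi_def)
  then show ?thesis
    using full_iff_trivial_relations S_extensional good_S good_phi_image
      trivial_relations_phi_image_iff by metis
qed

end

theorem lemma1:
  fixes n :: nat and X :: "nat \<Rightarrow> 'a set" and S C :: "(nat \<Rightarrow> 'a) set"
  assumes "\<forall>i<n. X i \<noteq> {}"
    and "S \<subseteq> PiE {..<n} X"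
    and "good n S"
    and "C \<subseteq> S"
    and "\<forall>R\<in>rel_components n S. \<exists>!c. c \<in> C \<inter> R"
  shows "phi n S ` C \<subseteq> PiE {..<n} (classes n S)
         \<and> good n (phi n S ` C)
         \<and> (full n S \<longleftrightarrow> full n (phi n S ` C))"
proof -
  interpret cross_section n S C
    using assms(2-5) by unfold_locales (auto simp: PiE_def)
  show ?thesis
    using phi_image_subset_classes good_phi_image full_phi_image_iff by blast
qed

end
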